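(* Let $K\ge1$ be an integer, $n\ge0$, let $P_n(x,y),Q_n(x,y)$ be real polynomials of degree $n$, and let $\mathrm{a}_1,\ldots,\mathrm{a}_K$ be pairwise distinct nonzero real numbers. For $0<r<\min_j|\mathrm{a}_j|$ let $\gamma_r=\{(x,y):x^2+y^2=r^2\}$ and \[ I(r)=\int_{\gamma_r}\frac{Q_n(x,y)\,dx-P_n(x,y)\,dy}{\prod_{j=1}^K(x-\mathrm{a}_j)}. \] Let $\widetilde K=\operatorname{card}\{|\mathrm{a}_1|,\ldots,|\mathrm{a}_K|\}$ and let $\widetilde{\mathrm{a}}_1,\ldots,\widetilde{\mathrm{a}}_{\widetilde K}$ be the distinct values of $\{|\mathrm{a}_1|,\ldots,|\mathrm{a}_K|\}$. Then there exist real polynomials $S^j(\rho)$, $j=1,\ldots,\widetilde K$, of degree at most $[(n-1)/2]+1$ and a real polynomial $T(\rho)$ of degree at most $[n/2]$ such that for all $0<r<\min_j|\mathrm{a}_j|$, \[ I(r)=\sum_{j=1}^{\widetilde K}\frac{S^j(r^2)}{\sqrt{\widetilde{\mathrm{a}}_j^2-r^2}}+T(r^2). \]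
   Context: $[s]$ denotes the integer part of $s$. The circle $\gamma_r$ is parametrized by $(r\cos\theta,r\sin\theta)$, $\theta\in[0,2\pi]$. *)

theory Defs
  imports "HOL-Analysis.Analysis" "HOL-Computational_Algebra.Polynomial"
begin

definition bipoly_eval :: "(nat \<Rightarrow> nat \<Rightarrow> real) \<Rightarrow> nat \<Rightarrow> real \<Rightarrow> real \<Rightarrow> real" where
  "bipoly_eval c n x y = (\<Sum>i\<le>n. \<Sum>j\<le>n - i. c i j * x ^ i * y ^ j)"

definition bipoly_degree :: "(nat \<Rightarrow> nat \<Rightarrow> real) \<Rightarrow> nat \<Rightarrow> bool" where
  "bipoly_degree c n \<longleftrightarrow> (\<forall>i j. c i j \<noteq> 0 \<longrightarrow> i + j \<le> n) \<and> (\<exists>i j. i + j = n \<and> c i j \<noteq> 0)"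

definition circle_line_integral ::
  "(real \<Rightarrow> real \<Rightarrow> real) \<Rightarrow> (real \<Rightarrow> real \<Rightarrow> real) \<Rightarrow> real \<Rightarrow> real" where
  "circle_line_integral F G r =
     integral {0..2*pi} (\<lambda>t. F (r * cos t) (r * sin t) * (- r * sin t)
                            + G (r * cos t) (r * sin t) * (r * cos t))"

end

theory Submission
  imports Defs
begin

text \<open>Parametrising the circle, I(r) is a combination of the moments
  \<integral> (r cos t)^i (r sin t)^j / \<Prod>(r cos t - a) dt over [0, 2\<pi>] with i + j \<le> n + 1.
  Moments with odd j vanish by the symmetry t \<mapsto> 2\<pi> - t; for even j = 2k, writing
  (r sin t)^2 = r^2 - (r cos t)^2 reduces them to moments with j = 0 times powers of r^2.
  Lagrange's partial fractions and division by x - a split x^i / \<Prod>(x - a) into multiples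
  of 1 / (x - a), whose integral in t is -sgn a \<cdot> 2\<pi> / \<surd>(a^2 - r^2), and a polynomial in
  x = r cos t, whose odd powers integrate to zero. Keeping track of degrees, a moment with
  i + j = d has the form \<Sum> S_b(r^2) / \<surd>(b^2 - r^2) + T(r^2) over b = |a|, with
  deg S_b \<le> d/2 and deg T < d/2.\<close>

lemma has_real_derivative_arctan_half_angle:
  fixes A B s t :: real
  assumes s2: "s\<^sup>2 = A\<^sup>2 - B\<^sup>2" and s0: "s \<ge> 0" and pos: "A + s > 0" "A + B * cos t > 0"
  shows "((\<lambda>t. arctan (B * sin t / (A + s + B * cos t))) has_real_derivative
           (A + B * cos t - s) / (2 * (A + B * cos t))) (at t)"
proof -
  define d where "d = A + s + B * cos t"
  have "d > 0" using pos s0 unfolding d_def by linarith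
  have pyth: "(B * cos t)\<^sup>2 + (B * sin t)\<^sup>2 = B\<^sup>2"
    by (simp add: power_mult_distrib flip: distrib_left)
  have den: "d\<^sup>2 + (B * sin t)\<^sup>2 = (A + s) * (2 * (A + B * cos t))"
    using s2 pyth unfolding d_def by (simp add: algebra_simps power2_eq_square)
  have num: "B * cos t * d + (B * sin t)\<^sup>2 = (A + s) * (A + B * cos t - s)"
    using s2 pyth unfolding d_def by (simp add: algebra_simps power2_eq_square)
  have "inverse (1 + (B * sin t / d)\<^sup>2) = d\<^sup>2 / (d\<^sup>2 + (B * sin t)\<^sup>2)"
    using \<open>d > 0\<close> by (simp add: field_simps power_divide)
  then have "inverse (1 + (B * sin t / d)\<^sup>2) * ((B * cos t * d + (B * sin t)\<^sup>2) / d\<^sup>2)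
        = (B * cos t * d + (B * sin t)\<^sup>2) / (d\<^sup>2 + (B * sin t)\<^sup>2)"
    using \<open>d > 0\<close> by simp
  also have "\<dots> = (A + B * cos t - s) / (2 * (A + B * cos t))"
    unfolding num den using pos by simp
  finally have alg: "inverse (1 + (B * sin t / d)\<^sup>2) * ((B * cos t * d + (B * sin t)\<^sup>2) / d\<^sup>2)
        = (A + B * cos t - s) / (2 * (A + B * cos t))" .
  have "((\<lambda>t. B * sin t / (A + s + B * cos t)) has_real_derivative
          (B * cos t * d + (B * sin t)\<^sup>2) / d\<^sup>2) (at t)"
    using \<open>d > 0\<close> unfolding d_def
    by (auto intro!: derivative_eq_intros simp: power2_eq_square algebra_simps)
  from DERIV_chain2[OF DERIV_arctan this] show ?thesis
    unfolding alg[symmetric] d_def .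
qed

lemma has_integral_inverse_add_cos:
  fixes A B :: real
  assumes "\<bar>B\<bar> < A"
  shows "((\<lambda>t. 1 / (A + B * cos t)) has_integral 2 * pi / sqrt (A\<^sup>2 - B\<^sup>2)) {0..2 * pi}"
proof -
  define s where "s = sqrt (A\<^sup>2 - B\<^sup>2)"
  have "B\<^sup>2 < A\<^sup>2"
    using assms by (metis abs_ge_zero abs_less_iff power2_abs power_strict_mono zero_less_numeral)
  then have s2: "s\<^sup>2 = A\<^sup>2 - B\<^sup>2" and "s > 0" unfolding s_def by simp_all
  have cos_pos: "A + B * cos t > 0" for t
  proof -
    have "\<bar>B * cos t\<bar> \<le> \<bar>B\<bar>" by (simp add: abs_mult mult_left_le)
    then show ?thesis using assms by linarith
  qed
  \<comment> \<open>The substitution u = tan (t/2), rewritten so that the primitive is smooth on all of \<real>.\<close>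
  define F where "F t = (t - 2 * arctan (B * sin t / (A + s + B * cos t))) / s" for t
  have "(F has_real_derivative 1 / (A + B * cos t)) (at t)" for t
  proof -
    have "(F has_real_derivative (1 - 2 * ((A + B * cos t - s) / (2 * (A + B * cos t)))) / s) (at t)"
      unfolding F_def
      using has_real_derivative_arctan_half_angle[OF s2 _ _ cos_pos] \<open>s > 0\<close> assms
      by (intro DERIV_cdivide DERIV_diff DERIV_cmult DERIV_ident) auto
    moreover have "(1 - 2 * ((A + B * cos t - s) / (2 * (A + B * cos t)))) / s = 1 / (A + B * cos t)"
      using cos_pos[of t] \<open>s > 0\<close> by (simp add: divide_simps)
    ultimately show ?thesis by simp
  qed
  then have "((\<lambda>t. 1 / (A + B * cos t)) has_integral F (2 * pi) - F 0) {0..2 * pi}"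
    by (intro fundamental_theorem_of_calculus)
       (auto simp: has_real_derivative_iff_has_vector_derivative has_vector_derivative_at_within)
  moreover have "F (2 * pi) - F 0 = 2 * pi / s" unfolding F_def by (simp add: diff_divide_distrib)
  ultimately show ?thesis unfolding s_def by simp
qed

lemma has_integral_inverse_cos_diff:
  fixes c r :: real
  assumes "0 < r" "r < \<bar>c\<bar>"
  shows "((\<lambda>t. 1 / (r * cos t - c)) has_integral - sgn c * 2 * pi / sqrt (\<bar>c\<bar>\<^sup>2 - r\<^sup>2)) {0..2 * pi}"
proof (cases "c > 0")
  case True
  have "((\<lambda>t. 1 / (c + (- r) * cos t)) has_integral 2 * pi / sqrt (c\<^sup>2 - (- r)\<^sup>2)) {0..2 * pi}"
    by (rule has_integral_inverse_add_cos) (use assms True in auto)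
  then have "((\<lambda>t. - (1 / (c - r * cos t))) has_integral - (2 * pi / sqrt (c\<^sup>2 - r\<^sup>2))) {0..2 * pi}"
    by (intro has_integral_neg) simp
  moreover have "- (1 / (c - r * cos t)) = 1 / (r * cos t - c)" for t
    by (metis minus_diff_eq minus_divide_right)
  ultimately show ?thesis using True by simp
next
  case False
  then have "c < 0" using assms by auto
  have "((\<lambda>t. 1 / (- c + r * cos t)) has_integral 2 * pi / sqrt ((- c)\<^sup>2 - r\<^sup>2)) {0..2 * pi}"
    by (rule has_integral_inverse_add_cos) (use assms \<open>c < 0\<close> in auto)
  then show ?thesis using \<open>c < 0\<close> by (simp add: algebra_simps)
qed

lemma integral_eq_0_if_reflect_antisym:
  fixes f :: "real \<Rightarrow> real"
  assumes "\<And>t. t \<in> {a..b} \<Longrightarrow> f (a + b - t) = - f t"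
  shows "integral {a..b} f = 0"
proof -
  have "integral {a..b} (\<lambda>t. f (a + b - t)) = integral {-b..-a} (\<lambda>x. f (- x))"
    using integral_shift_real_ivl[where f="\<lambda>x. f (- x)" and a="-b" and c="-(a+b)" and b="-a"]
    by (simp add: algebra_simps)
  also have "\<dots> = integral {a..b} f" by simp
  finally have "integral {a..b} f = integral {a..b} (\<lambda>t. f (a + b - t))" ..
  also have "\<dots> = integral {a..b} (\<lambda>t. - f t)"
    by (rule integral_cong) (use assms in auto)
  finally show ?thesis by simp
qed

lemma integral_cos_power_odd:
  assumes "odd u"
  shows "integral {0..2 * pi} (\<lambda>t. cos t ^ u) = 0"
proof -
  have "integral {0..pi} (\<lambda>t. cos t ^ u) = 0"
    by (rule integral_eq_0_if_reflect_antisym) (use assms in \<open>simp add: power_minus_odd\<close>)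
  moreover have "integral {pi..2 * pi} (\<lambda>t. cos t ^ u) = 0"
    by (rule integral_eq_0_if_reflect_antisym) (use assms in \<open>simp add: cos_diff power_minus_odd\<close>)
  moreover have "(\<lambda>t. cos t ^ u) integrable_on {0..2 * pi}"
    by (intro integrable_continuous_interval continuous_intros)
  ultimately show ?thesis
    using Henstock_Kurzweil_Integration.integral_combine[where a=0 and c=pi and b="2 * pi"]
    by (metis add.right_neutral pi_ge_zero mult_2 le_add_same_cancel1)
qed

lemma has_integral_scaled_cos_power:
  "((\<lambda>t. (r * cos t) ^ u) has_integral r ^ u * integral {0..2 * pi} (\<lambda>t. cos t ^ u)) {0..2 * pi}"
proof -
  have "((\<lambda>t. cos t ^ u) has_integral integral {0..2 * pi} (\<lambda>t. cos t ^ u)) {0..2 * pi}"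
    by (intro integrable_integral integrable_continuous_interval continuous_intros)
  from has_integral_mult_right[OF this, of "r ^ u"] show ?thesis
    by (simp add: power_mult_distrib)
qed

definition lagrange_weight :: "real set \<Rightarrow> real \<Rightarrow> real" where
  "lagrange_weight A c = 1 / (\<Prod>d\<in>A - {c}. (c - d))"

lemma sum_lagrange_basis_eq_1:
  fixes A :: "real set"
  assumes "finite A" "A \<noteq> {}"
  shows "(\<Sum>c\<in>A. smult (lagrange_weight A c) (\<Prod>d\<in>A - {c}. [:- d, 1:])) = 1"
    (is "?P = 1")
proof -
  have "degree ?P \<le> card A - 1"
  proof (intro degree_sum_le \<open>finite A\<close>)
    fix c assume "c \<in> A"
    have "degree (smult (lagrange_weight A c) (\<Prod>d\<in>A - {c}. [:- d, 1:]))
        \<le> degree (\<Prod>d\<in>A - {c}. [:- d, 1:])"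
      by (rule degree_smult_le)
    also have "\<dots> \<le> (\<Sum>d\<in>A - {c}. degree [:- d, 1:])"
      using degree_prod_sum_le[of "A - {c}" "\<lambda>d. [:- d, 1:]"] assms(1) by (simp add: o_def)
    also have "\<dots> = card A - 1" using \<open>c \<in> A\<close> assms by simp
    finally show "degree (smult (lagrange_weight A c) (\<Prod>d\<in>A - {c}. [:- d, 1:])) \<le> card A - 1" .
  qed
  moreover have "card A > 0" using assms by (simp add: card_gt_0_iff)
  ultimately have "degree ?P < card A" by linarith
  then show ?thesis
  proof (rule poly_eqI_degree[of A, rotated])
    fix c assume c: "c \<in> A"
    have "(\<Prod>d\<in>A - {c'}. (c - d)) = 0" if "c' \<in> A - {c}" for c'
      using c that assms(1) by (subst prod_zero_iff) auto
    then have "poly ?P c = lagrange_weight A c * (\<Prod>d\<in>A - {c}. (c - d))"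
      by (simp add: poly_sum poly_prod sum.remove[OF assms(1) c])
    also have "\<dots> = 1" using assms(1) by (simp add: lagrange_weight_def prod_zero_iff)
    finally show "poly ?P c = poly 1 c" by simp
  qed (use \<open>card A > 0\<close> in simp)
qed

lemma inverse_prod_partial_fractions:
  fixes A :: "real set"
  assumes "finite A" "A \<noteq> {}" "x \<notin> A"
  shows "1 / (\<Prod>c\<in>A. (x - c)) = (\<Sum>c\<in>A. lagrange_weight A c / (x - c))"
proof -
  have nonzero: "x - c \<noteq> 0" if "c \<in> A" for c using assms(3) that by auto
  have "1 = (\<Sum>c\<in>A. lagrange_weight A c * (\<Prod>d\<in>A - {c}. (x - d)))"
    using arg_cong[OF sum_lagrange_basis_eq_1[OF assms(1,2)], of "\<lambda>p. poly p x"]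
    by (simp add: poly_sum poly_prod)
  also have "\<dots> = (\<Sum>c\<in>A. lagrange_weight A c / (x - c)) * (\<Prod>c\<in>A. (x - c))"
    unfolding sum_distrib_right
  proof (intro sum.cong refl)
    fix c assume "c \<in> A"
    then show "lagrange_weight A c * (\<Prod>d\<in>A - {c}. (x - d))
        = lagrange_weight A c / (x - c) * (\<Prod>c\<in>A. (x - c))"
      using nonzero by (simp add: prod.remove[OF assms(1)])
  qed
  finally show ?thesis
    using assms(1) nonzero by (simp add: field_simps prod_zero_iff)
qed

lemma power_divide_diff_eq:
  fixes x c :: real
  assumes "x \<noteq> c"
  shows "x ^ m / (x - c) = c ^ m / (x - c) + (\<Sum>u<m. c ^ (m - Suc u) * x ^ u)"
proof -
  have "x ^ m - c ^ m = (x - c) * (\<Sum>u<m. c ^ (m - Suc u) * x ^ u)"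
    by (rule power_diff_sumr2)
  then show ?thesis using assms by (simp add: field_simps)
qed

definition radial_form :: "real set \<Rightarrow> (real \<Rightarrow> real poly) \<Rightarrow> real poly \<Rightarrow> real \<Rightarrow> real" where
  "radial_form B S T r = (\<Sum>b\<in>B. poly (S b) (r\<^sup>2) / sqrt (b\<^sup>2 - r\<^sup>2)) + poly T (r\<^sup>2)"

definition has_radial_expansion :: "real set \<Rightarrow> real \<Rightarrow> nat \<Rightarrow> (real \<Rightarrow> real) \<Rightarrow> bool" where
  "has_radial_expansion B m d f \<longleftrightarrow>
     (\<exists>S T. (\<forall>b\<in>B. degree (S b) \<le> d div 2) \<and> (T = 0 \<or> 2 * degree T < d) \<and>
            (\<forall>r. 0 < r \<and> r < m \<longrightarrow> f r = radial_form B S T r))"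

lemma has_radial_expansionI:
  assumes "\<And>b. b \<in> B \<Longrightarrow> degree (S b) \<le> d div 2" "T = 0 \<or> 2 * degree T < d"
    "\<And>r. 0 < r \<Longrightarrow> r < m \<Longrightarrow> f r = radial_form B S T r"
  shows "has_radial_expansion B m d f"
  using assms unfolding has_radial_expansion_def by blast

lemma has_radial_expansionE:
  assumes "has_radial_expansion B m d f"
  obtains S T where "\<And>b. b \<in> B \<Longrightarrow> degree (S b) \<le> d div 2" "T = 0 \<or> 2 * degree T < d"
    "\<And>r. 0 < r \<Longrightarrow> r < m \<Longrightarrow> f r = radial_form B S T r"
  using assms unfolding has_radial_expansion_def by blast

lemma has_radial_expansion_cong:
  assumes "has_radial_expansion B m d f" "\<And>r. 0 < r \<Longrightarrow> r < m \<Longrightarrow> f r = g r"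
  shows "has_radial_expansion B m d g"
  using assms by (metis has_radial_expansionE has_radial_expansionI)

lemma has_radial_expansion_mono:
  assumes "has_radial_expansion B m d f" "d \<le> d'"
  shows "has_radial_expansion B m d' f"
proof -
  obtain S T where "\<And>b. b \<in> B \<Longrightarrow> degree (S b) \<le> d div 2" "T = 0 \<or> 2 * degree T < d"
    "\<And>r. 0 < r \<Longrightarrow> r < m \<Longrightarrow> f r = radial_form B S T r"
    using assms(1) by (rule has_radial_expansionE) blast
  moreover have "d div 2 \<le> d' div 2" using assms(2) by (rule div_le_mono)
  ultimately show ?thesis
    using assms(2) by (intro has_radial_expansionI[of B S d' T]) force+
qed

lemma has_radial_expansion_zero: "has_radial_expansion B m d (\<lambda>r. 0)"
  by (rule has_radial_expansionI[of B "\<lambda>_. 0" d 0]) (simp_all add: radial_form_def)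

lemma has_radial_expansion_add:
  assumes "has_radial_expansion B m d f" "has_radial_expansion B m d g"
  shows "has_radial_expansion B m d (\<lambda>r. f r + g r)"
proof -
  obtain S1 T1 where S1: "\<And>b. b \<in> B \<Longrightarrow> degree (S1 b) \<le> d div 2" and T1: "T1 = 0 \<or> 2 * degree T1 < d"
    and f: "\<And>r. 0 < r \<Longrightarrow> r < m \<Longrightarrow> f r = radial_form B S1 T1 r"
    using assms(1) by (rule has_radial_expansionE) blast
  obtain S2 T2 where S2: "\<And>b. b \<in> B \<Longrightarrow> degree (S2 b) \<le> d div 2" and T2: "T2 = 0 \<or> 2 * degree T2 < d"
    and g: "\<And>r. 0 < r \<Longrightarrow> r < m \<Longrightarrow> g r = radial_form B S2 T2 r"
    using assms(2) by (rule has_radial_expansionE) blast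
  show ?thesis
  proof (rule has_radial_expansionI)
    show "degree (S1 b + S2 b) \<le> d div 2" if "b \<in> B" for b
      using S1 S2 that degree_add_le_max[of "S1 b" "S2 b"] by fastforce
    show "T1 + T2 = 0 \<or> 2 * degree (T1 + T2) < d"
      using T1 T2 degree_add_le_max[of T1 T2] by auto
    show "f r + g r = radial_form B (\<lambda>b. S1 b + S2 b) (T1 + T2) r" if "0 < r" "r < m" for r
      using f g that by (simp add: radial_form_def add_divide_distrib sum.distrib)
  qed
qed

lemma has_radial_expansion_cmult:
  assumes "has_radial_expansion B m d f"
  shows "has_radial_expansion B m d (\<lambda>r. k * f r)"
proof -
  obtain S T where S: "\<And>b. b \<in> B \<Longrightarrow> degree (S b) \<le> d div 2" and T: "T = 0 \<or> 2 * degree T < d"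
    and f: "\<And>r. 0 < r \<Longrightarrow> r < m \<Longrightarrow> f r = radial_form B S T r"
    using assms by (rule has_radial_expansionE) blast
  show ?thesis
  proof (rule has_radial_expansionI)
    show "degree (smult k (S b)) \<le> d div 2" if "b \<in> B" for b
      using S that degree_smult_le[of k "S b"] by fastforce
    show "smult k T = 0 \<or> 2 * degree (smult k T) < d"
      using T degree_smult_le[of k T] by auto
    show "k * f r = radial_form B (\<lambda>b. smult k (S b)) (smult k T) r" if "0 < r" "r < m" for r
      using f that by (simp add: radial_form_def sum_distrib_left distrib_left)
  qed
qed

lemma has_radial_expansion_sum:
  assumes "finite I" "\<And>i. i \<in> I \<Longrightarrow> has_radial_expansion B m d (f i)"
  shows "has_radial_expansion B m d (\<lambda>r. \<Sum>i\<in>I. f i r)"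
  using assms
  by (induction I rule: finite_induct) (simp_all add: has_radial_expansion_zero has_radial_expansion_add)

lemma has_radial_expansion_mult_square_power:
  assumes "has_radial_expansion B m d f"
  shows "has_radial_expansion B m (d + 2 * e) (\<lambda>r. (r\<^sup>2) ^ e * f r)"
proof -
  obtain S T where S: "\<And>b. b \<in> B \<Longrightarrow> degree (S b) \<le> d div 2" and T: "T = 0 \<or> 2 * degree T < d"
    and f: "\<And>r. 0 < r \<Longrightarrow> r < m \<Longrightarrow> f r = radial_form B S T r"
    using assms by (rule has_radial_expansionE) blast
  have deg: "degree (monom 1 e * p) \<le> e + degree p" for p :: "real poly"
    using degree_mult_le[of "monom 1 e" p] degree_monom_le[of "1::real" e] by linarith
  show ?thesis
  proof (rule has_radial_expansionI)
    show "degree (monom 1 e * S b) \<le> (d + 2 * e) div 2" if "b \<in> B" for b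
      using S that deg[of "S b"] by fastforce
    show "monom 1 e * T = 0 \<or> 2 * degree (monom 1 e * T) < d + 2 * e"
      using T deg[of T] by auto
    show "(r\<^sup>2) ^ e * f r = radial_form B (\<lambda>b. monom 1 e * S b) (monom 1 e * T) r"
      if "0 < r" "r < m" for r
      using f that by (simp add: radial_form_def sum_distrib_left distrib_left poly_monom mult.assoc)
  qed
qed

lemma has_radial_expansion_inverse_sqrt:
  assumes "finite B" "b \<in> B"
  shows "has_radial_expansion B m d (\<lambda>r. k / sqrt (b\<^sup>2 - r\<^sup>2))"
proof (rule has_radial_expansionI[of B "\<lambda>b'. if b' = b then [:k:] else 0" d 0])
  show "k / sqrt (b\<^sup>2 - r\<^sup>2) = radial_form B (\<lambda>b'. if b' = b then [:k:] else 0) 0 r" for r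
    using assms by (simp add: radial_form_def if_distrib if_distribR cong: if_cong)
qed simp_all

lemma has_radial_expansion_square_power:
  assumes "2 * e < d"
  shows "has_radial_expansion B m d (\<lambda>r. k * (r\<^sup>2) ^ e)"
  by (rule has_radial_expansionI[of B "\<lambda>_. 0" d "monom k e"])
     (use assms degree_monom_le[of k e] in \<open>auto simp: radial_form_def poly_monom\<close>)

definition circle_moment :: "real set \<Rightarrow> nat \<Rightarrow> nat \<Rightarrow> real \<Rightarrow> real" where
  "circle_moment A i j r =
     integral {0..2 * pi} (\<lambda>t. (r * cos t) ^ i * (r * sin t) ^ j / (\<Prod>c\<in>A. (r * cos t - c)))"

lemma scaled_cos_diff_nonzero:
  fixes r c t :: real
  assumes "\<bar>r\<bar> < \<bar>c\<bar>"
  shows "r * cos t - c \<noteq> 0"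
proof -
  have "\<bar>r * cos t\<bar> \<le> \<bar>r\<bar>"
    using mult_left_le[OF abs_cos_le_one[of t] abs_ge_zero[of r]] by (simp add: abs_mult)
  then show ?thesis using assms by auto
qed

lemma has_integral_circle_moment:
  assumes "finite A" "\<forall>c\<in>A. \<bar>r\<bar> < \<bar>c\<bar>"
  shows "((\<lambda>t. (r * cos t) ^ i * (r * sin t) ^ j / (\<Prod>c\<in>A. (r * cos t - c)))
           has_integral circle_moment A i j r) {0..2 * pi}"
  unfolding circle_moment_def
  using assms scaled_cos_diff_nonzero
  by (intro integrable_integral integrable_continuous_interval continuous_intros)
     (auto simp: prod_zero_iff)

lemma circle_moment_odd_sin:
  assumes "odd j"
  shows "circle_moment A i j r = 0"
  unfolding circle_moment_def
  by (rule integral_eq_0_if_reflect_antisym) (use assms in \<open>simp add: cos_diff sin_diff power_minus_odd\<close>)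

lemma circle_moment_even_sin:
  assumes "finite A" "\<forall>c\<in>A. \<bar>r\<bar> < \<bar>c\<bar>"
  shows "circle_moment A i (2 * k) r =
           (\<Sum>l\<le>k. (of_nat (k choose l) * (- 1) ^ l) * ((r\<^sup>2) ^ (k - l) * circle_moment A (i + 2 * l) 0 r))"
proof -
  have "(r * cos t) ^ i * (r * sin t) ^ (2 * k) / (\<Prod>c\<in>A. (r * cos t - c)) =
       (\<Sum>l\<le>k. (of_nat (k choose l) * (- 1) ^ l) * ((r\<^sup>2) ^ (k - l) *
          ((r * cos t) ^ (i + 2 * l) * (r * sin t) ^ 0 / (\<Prod>c\<in>A. (r * cos t - c)))))" for t
  proof -
    let ?x = "r * cos t" and ?D = "\<Prod>c\<in>A. (r * cos t - c)"
    have "(r * sin t)\<^sup>2 = - (?x\<^sup>2) + r\<^sup>2"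
      by (simp add: power_mult_distrib sin_squared_eq algebra_simps)
    then have "((r * sin t)\<^sup>2) ^ k = (\<Sum>l\<le>k. of_nat (k choose l) * (- (?x\<^sup>2)) ^ l * (r\<^sup>2) ^ (k - l))"
      by (simp only: binomial_ring)
    then have "(r * sin t) ^ (2 * k) = (\<Sum>l\<le>k. of_nat (k choose l) * (- (?x\<^sup>2)) ^ l * (r\<^sup>2) ^ (k - l))"
      by (simp only: power_mult)
    also have "\<dots> = (\<Sum>l\<le>k. of_nat (k choose l) * (- 1) ^ l * ?x ^ (2 * l) * (r\<^sup>2) ^ (k - l))"
      by (simp add: power_minus[of "?x\<^sup>2"] power_mult mult.assoc)
    finally show ?thesis
      by (simp add: sum_distrib_left sum_divide_distrib power_add mult_ac)
  qed
  then have "((\<lambda>t. (r * cos t) ^ i * (r * sin t) ^ (2 * k) / (\<Prod>c\<in>A. (r * cos t - c))) has_integral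
      (\<Sum>l\<le>k. (of_nat (k choose l) * (- 1) ^ l) * ((r\<^sup>2) ^ (k - l) * circle_moment A (i + 2 * l) 0 r)))
      {0..2 * pi}"
    by (simp only:)
       (intro has_integral_sum finite_atMost has_integral_mult_right has_integral_circle_moment assms)
  then show ?thesis using has_integral_unique has_integral_circle_moment[OF assms] by blast
qed

lemma has_radial_expansion_cos_power_integral:
  assumes "u < d"
  shows "has_radial_expansion B m d (\<lambda>r. r ^ u * integral {0..2 * pi} (\<lambda>t. cos t ^ u))"
proof (cases "even u")
  case True
  then obtain e where "u = 2 * e" by blast
  have "has_radial_expansion B m d (\<lambda>r. integral {0..2 * pi} (\<lambda>t. cos t ^ u) * (r\<^sup>2) ^ e)"
    by (rule has_radial_expansion_square_power) (use assms \<open>u = 2 * e\<close> in simp)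
  moreover have "r ^ u = (r\<^sup>2) ^ e" for r :: real
    by (simp add: \<open>u = 2 * e\<close> power_mult)
  ultimately show ?thesis by (simp add: mult.commute)
next
  case False
  then show ?thesis using has_radial_expansion_zero by (simp add: integral_cos_power_odd)
qed

lemma power_divide_prod_partial_fractions:
  fixes A :: "real set"
  assumes "finite A" "A \<noteq> {}" "x \<notin> A"
  shows "x ^ i / (\<Prod>c\<in>A. (x - c)) =
           (\<Sum>c\<in>A. lagrange_weight A c * (c ^ i * (1 / (x - c)) + (\<Sum>u<i. c ^ (i - Suc u) * x ^ u)))"
proof -
  have "x ^ i / (\<Prod>c\<in>A. (x - c)) = (\<Sum>c\<in>A. lagrange_weight A c * (x ^ i / (x - c)))"
    using inverse_prod_partial_fractions[OF assms] by (simp add: divide_inverse sum_distrib_left ac_simps)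
  also have "\<dots> = (\<Sum>c\<in>A. lagrange_weight A c * (c ^ i * (1 / (x - c)) + (\<Sum>u<i. c ^ (i - Suc u) * x ^ u)))"
  proof (intro sum.cong refl)
    fix c assume "c \<in> A"
    then have "x \<noteq> c" using assms(3) by auto
    then show "lagrange_weight A c * (x ^ i / (x - c)) =
        lagrange_weight A c * (c ^ i * (1 / (x - c)) + (\<Sum>u<i. c ^ (i - Suc u) * x ^ u))"
      unfolding power_divide_diff_eq[OF \<open>x \<noteq> c\<close>] by simp
  qed
  finally show ?thesis .
qed

lemma circle_moment_cos_eq:
  assumes "finite A" "A \<noteq> {}" "0 < r" "\<forall>c\<in>A. r < \<bar>c\<bar>"
  shows "circle_moment A i 0 r = (\<Sum>c\<in>A. lagrange_weight A c *
           (c ^ i * (- sgn c * 2 * pi / sqrt (\<bar>c\<bar>\<^sup>2 - r\<^sup>2))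
            + (\<Sum>u<i. c ^ (i - Suc u) * (r ^ u * integral {0..2 * pi} (\<lambda>t. cos t ^ u)))))"
    (is "_ = ?V")
proof -
  have poles: "\<forall>c\<in>A. \<bar>r\<bar> < \<bar>c\<bar>" using assms(3,4) by simp
  then have "r * cos t \<notin> A" for t using scaled_cos_diff_nonzero by force
  then have "(\<lambda>t. (r * cos t) ^ i * (r * sin t) ^ 0 / (\<Prod>c\<in>A. (r * cos t - c))) =
      (\<lambda>t. \<Sum>c\<in>A. lagrange_weight A c *
         (c ^ i * (1 / (r * cos t - c)) + (\<Sum>u<i. c ^ (i - Suc u) * (r * cos t) ^ u)))"
    by (simp add: power_divide_prod_partial_fractions[OF assms(1,2)])
  moreover have "((\<lambda>t. \<Sum>c\<in>A. lagrange_weight A c *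
      (c ^ i * (1 / (r * cos t - c)) + (\<Sum>u<i. c ^ (i - Suc u) * (r * cos t) ^ u)))
      has_integral ?V) {0..2 * pi}"
    using assms(3,4)
    by (intro has_integral_sum assms(1) finite_lessThan has_integral_mult_right has_integral_add
        has_integral_inverse_cos_diff has_integral_scaled_cos_power) auto
  ultimately have "((\<lambda>t. (r * cos t) ^ i * (r * sin t) ^ 0 / (\<Prod>c\<in>A. (r * cos t - c)))
      has_integral ?V) {0..2 * pi}"
    by simp
  then show ?thesis
    using has_integral_unique has_integral_circle_moment[OF assms(1) poles] by blast
qed

lemma has_radial_expansion_circle_moment_cos:
  assumes "finite A" "A \<noteq> {}" "\<forall>c\<in>A. m \<le> \<bar>c\<bar>"
  shows "has_radial_expansion (abs ` A) m i (circle_moment A i 0)"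
proof -
  have "has_radial_expansion (abs ` A) m i (\<lambda>r. \<Sum>c\<in>A. lagrange_weight A c *
      (c ^ i * (- sgn c * 2 * pi / sqrt (\<bar>c\<bar>\<^sup>2 - r\<^sup>2))
       + (\<Sum>u<i. c ^ (i - Suc u) * (r ^ u * integral {0..2 * pi} (\<lambda>t. cos t ^ u)))))"
    (is "has_radial_expansion _ _ _ ?V")
    using assms(1)
    by (intro has_radial_expansion_sum has_radial_expansion_cmult has_radial_expansion_add
        has_radial_expansion_inverse_sqrt has_radial_expansion_cos_power_integral finite_lessThan) auto
  then show ?thesis
  proof (rule has_radial_expansion_cong)
    fix r :: real assume "0 < r" "r < m"
    then show "?V r = circle_moment A i 0 r"
      using assms by (intro circle_moment_cos_eq[symmetric]) force+
  qed
qed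

lemma has_radial_expansion_circle_moment:
  assumes "finite A" "A \<noteq> {}" "\<forall>c\<in>A. m \<le> \<bar>c\<bar>"
  shows "has_radial_expansion (abs ` A) m (i + j) (circle_moment A i j)"
proof (cases "even j")
  case True
  then obtain k where k: "j = 2 * k" by blast
  have "has_radial_expansion (abs ` A) m (i + j) (\<lambda>r. \<Sum>l\<le>k. (of_nat (k choose l) * (- 1) ^ l) *
      ((r\<^sup>2) ^ (k - l) * circle_moment A (i + 2 * l) 0 r))"
    (is "has_radial_expansion _ _ _ ?V")
  proof (intro has_radial_expansion_sum has_radial_expansion_cmult finite_atMost)
    fix l assume "l \<in> {..k}"
    then have "i + j = i + 2 * l + 2 * (k - l)" using k by simp
    with has_radial_expansion_mult_square_power[OF has_radial_expansion_circle_moment_cos[OF assms]]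
    show "has_radial_expansion (abs ` A) m (i + j)
        (\<lambda>r. (r\<^sup>2) ^ (k - l) * circle_moment A (i + 2 * l) 0 r)"
      by metis
  qed
  then show ?thesis
  proof (rule has_radial_expansion_cong)
    fix r :: real assume "0 < r" "r < m"
    then have "\<forall>c\<in>A. \<bar>r\<bar> < \<bar>c\<bar>" using assms(3) by force
    then show "?V r = circle_moment A i j r"
      using circle_moment_even_sin[OF assms(1)] k by simp
  qed
next
  case False
  show ?thesis
    by (rule has_radial_expansion_cong[OF has_radial_expansion_zero])
       (simp add: circle_moment_odd_sin False)
qed

lemma circle_line_integral_eq_circle_moments:
  assumes "finite A" "\<forall>c\<in>A. \<bar>r\<bar> < \<bar>c\<bar>"
  shows "circle_line_integral
           (\<lambda>x y. bipoly_eval q n x y / (\<Prod>c\<in>A. (x - c)))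
           (\<lambda>x y. - bipoly_eval p n x y / (\<Prod>c\<in>A. (x - c))) r
         = (\<Sum>i\<le>n. \<Sum>j\<le>n - i.
              (- q i j) * circle_moment A i (Suc j) r + (- p i j) * circle_moment A (Suc i) j r)"
proof -
  let ?M = "\<lambda>i j t. (r * cos t) ^ i * (r * sin t) ^ j / (\<Prod>c\<in>A. (r * cos t - c))"
  have "bipoly_eval q n (r * cos t) (r * sin t) / (\<Prod>c\<in>A. (r * cos t - c)) * (- r * sin t)
      + (- bipoly_eval p n (r * cos t) (r * sin t) / (\<Prod>c\<in>A. (r * cos t - c))) * (r * cos t)
      = (\<Sum>i\<le>n. \<Sum>j\<le>n - i. (- q i j) * ?M i (Suc j) t + (- p i j) * ?M (Suc i) j t)" for t
  proof -
    let ?x = "r * cos t" and ?y = "r * sin t" and ?D = "\<Prod>c\<in>A. (r * cos t - c)"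
    have "bipoly_eval c n ?x ?y / ?D * z = (\<Sum>i\<le>n. \<Sum>j\<le>n - i. c i j * (?x ^ i * ?y ^ j * z / ?D))"
      for c z unfolding bipoly_eval_def
      by (simp add: sum_divide_distrib sum_distrib_right sum_distrib_left mult_ac)
    then have "bipoly_eval q n ?x ?y / ?D * (- ?y) + bipoly_eval p n ?x ?y / ?D * (- ?x)
      = (\<Sum>i\<le>n. \<Sum>j\<le>n - i. q i j * (?x ^ i * ?y ^ j * (- ?y) / ?D) + p i j * (?x ^ i * ?y ^ j * (- ?x) / ?D))"
      by (simp only: sum.distrib)
    also have "\<dots> = (\<Sum>i\<le>n. \<Sum>j\<le>n - i. (- q i j) * ?M i (Suc j) t + (- p i j) * ?M (Suc i) j t)"
      by (intro sum.cong refl) (simp add: mult_ac)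
    finally show ?thesis by simp
  qed
  moreover have "((\<lambda>t. \<Sum>i\<le>n. \<Sum>j\<le>n - i. (- q i j) * ?M i (Suc j) t + (- p i j) * ?M (Suc i) j t) has_integral
      (\<Sum>i\<le>n. \<Sum>j\<le>n - i. (- q i j) * circle_moment A i (Suc j) r + (- p i j) * circle_moment A (Suc i) j r))
      {0..2 * pi}"
    by (intro has_integral_sum finite_atMost has_integral_add has_integral_mult_right
        has_integral_circle_moment assms)
  ultimately show ?thesis
    unfolding circle_line_integral_def by (simp add: integral_unique)
qed

lemma floor_half_pred_plus_one: "\<lfloor>(real n - 1) / 2\<rfloor> + 1 = int ((n + 1) div 2)"
proof -
  have "\<lfloor>(real n - 1) / 2\<rfloor> + 1 = \<lfloor>(real n - 1) / 2 + of_int 1\<rfloor>" by (rule floor_add_int)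
  also have "(real n - 1) / 2 + of_int 1 = real (n + 1) / real 2" by (simp add: field_simps)
  also have "\<lfloor>real (n + 1) / real 2\<rfloor> = int ((n + 1) div 2)" by (rule floor_divide_of_nat_eq)
  finally show ?thesis .
qed

lemma has_radial_expansion_weight_SucD:
  assumes "has_radial_expansion B m (n + 1) f"
  shows "\<exists>S T. (\<forall>b\<in>B. int (degree (S b)) \<le> \<lfloor>(real n - 1) / 2\<rfloor> + 1) \<and> degree T \<le> n div 2 \<and>
           (\<forall>r. 0 < r \<and> r < m \<longrightarrow>
              f r = (\<Sum>b\<in>B. poly (S b) (r\<^sup>2) / sqrt (b\<^sup>2 - r\<^sup>2)) + poly T (r\<^sup>2))"
proof -
  obtain S T where S: "\<And>b. b \<in> B \<Longrightarrow> degree (S b) \<le> (n + 1) div 2"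
    and T: "T = 0 \<or> 2 * degree T < n + 1"
    and f: "\<And>r. 0 < r \<Longrightarrow> r < m \<Longrightarrow> f r = radial_form B S T r"
    using assms by (rule has_radial_expansionE) blast
  have "2 * degree T < n + 1" using T by (cases "T = 0") simp_all
  then have "degree T \<le> n div 2" by presburger
  with S f show ?thesis
    unfolding floor_half_pred_plus_one radial_form_def by (intro exI[of _ S] exI[of _ T]) auto
qed

theorem proposition2p3:
  fixes K n :: nat and p q :: "nat \<Rightarrow> nat \<Rightarrow> real" and a :: "nat \<Rightarrow> real"
  assumes "K \<ge> 1"
    and "bipoly_degree p n" and "bipoly_degree q n"
    and "inj_on a {1..K}" and "\<forall>j\<in>{1..K}. a j \<noteq> 0"
  shows "\<exists>(S :: real \<Rightarrow> real poly) (T :: real poly).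
     (\<forall>b\<in>(\<lambda>j. \<bar>a j\<bar>) ` {1..K}. int (degree (S b)) \<le> \<lfloor>(real n - 1) / 2\<rfloor> + 1)
     \<and> degree T \<le> n div 2
     \<and> (\<forall>r. 0 < r \<and> r < Min ((\<lambda>j. \<bar>a j\<bar>) ` {1..K}) \<longrightarrow>
          circle_line_integral
            (\<lambda>x y. bipoly_eval q n x y / (\<Prod>j=1..K. (x - a j)))
            (\<lambda>x y. - bipoly_eval p n x y / (\<Prod>j=1..K. (x - a j))) r
          = (\<Sum>b\<in>(\<lambda>j. \<bar>a j\<bar>) ` {1..K}. poly (S b) (r\<^sup>2) / sqrt (b\<^sup>2 - r\<^sup>2))
            + poly T (r\<^sup>2))"
proof -
  define A where "A = a ` {1..K}"
  have A: "finite A" "A \<noteq> {}" "\<forall>c\<in>A. Min (abs ` A) \<le> \<bar>c\<bar>"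
    unfolding A_def using assms(1) by auto
  have B: "(\<lambda>j. \<bar>a j\<bar>) ` {1..K} = abs ` A" unfolding A_def by (simp add: image_image)
  have prod: "(\<Prod>j=1..K. (x - a j)) = (\<Prod>c\<in>A. (x - c))" for x
    unfolding A_def using prod.reindex[OF assms(4), of "\<lambda>c. x - c"] by simp
  have "has_radial_expansion (abs ` A) (Min (abs ` A)) (n + 1)
      (\<lambda>r. \<Sum>i\<le>n. \<Sum>j\<le>n - i. (- q i j) * circle_moment A i (Suc j) r + (- p i j) * circle_moment A (Suc i) j r)"
    (is "has_radial_expansion _ _ _ ?I")
    using A
    by (intro has_radial_expansion_sum has_radial_expansion_add has_radial_expansion_cmult finite_atMost
        has_radial_expansion_mono[OF has_radial_expansion_circle_moment]) auto
  then have "has_radial_expansion (abs ` A) (Min (abs ` A)) (n + 1) (circle_line_integral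
      (\<lambda>x y. bipoly_eval q n x y / (\<Prod>c\<in>A. (x - c))) (\<lambda>x y. - bipoly_eval p n x y / (\<Prod>c\<in>A. (x - c))))"
    (is "has_radial_expansion _ _ _ ?L")
  proof (rule has_radial_expansion_cong)
    fix r :: real assume "0 < r" "r < Min (abs ` A)"
    then have "\<forall>c\<in>A. \<bar>r\<bar> < \<bar>c\<bar>" using A(3) by force
    then show "?I r = ?L r"
      by (rule circle_line_integral_eq_circle_moments[OF A(1), symmetric])
  qed
  from has_radial_expansion_weight_SucD[OF this] show ?thesis unfolding B prod .
qed

end
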